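(* Under the standing assumptions, let $v$ be a vertex of degree $8$ in $G$. If there is a vertex $u$ of degree $2$ such that the edge $vu$ lies on a $3$-face, then there is no vertex $w$ of degree $3$ such that the edge $vw$ lies on a $3$-face.
   Context: Standing assumptions: A total $9$-coloring of a graph is an assignment of colors from $\{1,\dots,9\}$ to the vertices and edges such that adjacent vertices, edges sharing an endpoint, and a vertex and an incident edge receive different colors. A $4$-fan is the graph on six vertices $c,u_1,\dots,u_5$ with edges $cu_j$ ($1\le j\le5$) and $u_ju_{j+1}$ ($1\le j\le4$). $G$ is a minimal counterexample: $G$ is a simple planar graph with maximum degree $8$, containing no subgraph isomorphic to a $4$-fan, that has no total $9$-coloring, and such that every simple planar graph $H$ with maximum degree at most $8$, no subgraph isomorphic to a $4$-fan, and $|V(H)|+|E(H)|<|V(G)|+|E(G)|$ has a total $9$-coloring. $G$ is considered with a fixed plane embedding; a $3$-face is a face of length $3$. *)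

theory Defs
  imports "HOL-Analysis.Analysis"
begin

definition simple_graph :: "'a set \<Rightarrow> 'a set set \<Rightarrow> bool" where
  "simple_graph V E \<longleftrightarrow> finite V \<and>
     (\<forall>e\<in>E. \<exists>x y. x \<in> V \<and> y \<in> V \<and> x \<noteq> y \<and> e = {x, y})"

definition degree :: "'a set \<Rightarrow> 'a set set \<Rightarrow> 'a \<Rightarrow> nat" where
  "degree V E v = card {u \<in> V. {v, u} \<in> E}"

definition max_degree_eq :: "'a set \<Rightarrow> 'a set set \<Rightarrow> nat \<Rightarrow> bool" where
  "max_degree_eq V E d \<longleftrightarrow> (\<forall>v\<in>V. degree V E v \<le> d) \<and> (\<exists>v\<in>V. degree V E v = d)"

definition plane_embedding ::
  "'a set \<Rightarrow> 'a set set \<Rightarrow> ('a \<Rightarrow> complex) \<Rightarrow> ('a set \<Rightarrow> real \<Rightarrow> complex) \<Rightarrow> bool" where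
  "plane_embedding V E pos \<gamma> \<longleftrightarrow>
     inj_on pos V \<and>
     (\<forall>e\<in>E. arc (\<gamma> e) \<and>
        (\<exists>x y. e = {x, y} \<and> pathstart (\<gamma> e) = pos x \<and> pathfinish (\<gamma> e) = pos y) \<and>
        (\<forall>w\<in>V. pos w \<in> path_image (\<gamma> e) \<longrightarrow> w \<in> e)) \<and>
     (\<forall>e\<in>E. \<forall>e'\<in>E. e \<noteq> e' \<longrightarrow> path_image (\<gamma> e) \<inter> path_image (\<gamma> e') \<subseteq> pos ` (e \<inter> e'))"

definition planar :: "'a set \<Rightarrow> 'a set set \<Rightarrow> bool" where
  "planar V E \<longleftrightarrow> (\<exists>pos \<gamma>. plane_embedding V E pos \<gamma>)"

definition drawing ::
  "'a set \<Rightarrow> 'a set set \<Rightarrow> ('a \<Rightarrow> complex) \<Rightarrow> ('a set \<Rightarrow> real \<Rightarrow> complex) \<Rightarrow> complex set" where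
  "drawing V E pos \<gamma> = pos ` V \<union> (\<Union>e\<in>E. path_image (\<gamma> e))"

definition faces ::
  "'a set \<Rightarrow> 'a set set \<Rightarrow> ('a \<Rightarrow> complex) \<Rightarrow> ('a set \<Rightarrow> real \<Rightarrow> complex) \<Rightarrow> complex set set" where
  "faces V E pos \<gamma> = components (- drawing V E pos \<gamma>)"

definition is_3face ::
  "'a set \<Rightarrow> 'a set set \<Rightarrow> ('a \<Rightarrow> complex) \<Rightarrow> ('a set \<Rightarrow> real \<Rightarrow> complex) \<Rightarrow> complex set \<Rightarrow> bool" where
  "is_3face V E pos \<gamma> F \<longleftrightarrow> F \<in> faces V E pos \<gamma> \<and>
     (\<exists>a b c. a \<noteq> b \<and> b \<noteq> c \<and> a \<noteq> c \<and> {a, b} \<in> E \<and> {b, c} \<in> E \<and> {a, c} \<in> E \<and>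
        frontier F = path_image (\<gamma> {a, b}) \<union> path_image (\<gamma> {b, c}) \<union> path_image (\<gamma> {a, c}))"

definition edge_on_3face ::
  "'a set \<Rightarrow> 'a set set \<Rightarrow> ('a \<Rightarrow> complex) \<Rightarrow> ('a set \<Rightarrow> real \<Rightarrow> complex) \<Rightarrow> 'a set \<Rightarrow> bool" where
  "edge_on_3face V E pos \<gamma> e \<longleftrightarrow>
     (\<exists>F. is_3face V E pos \<gamma> F \<and> path_image (\<gamma> e) \<subseteq> frontier F)"

definition has_4fan :: "'a set \<Rightarrow> 'a set set \<Rightarrow> bool" where
  "has_4fan V E \<longleftrightarrow> (\<exists>c u1 u2 u3 u4 u5.
     distinct [c, u1, u2, u3, u4, u5] \<and> set [c, u1, u2, u3, u4, u5] \<subseteq> V \<and>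
     {c, u1} \<in> E \<and> {c, u2} \<in> E \<and> {c, u3} \<in> E \<and> {c, u4} \<in> E \<and> {c, u5} \<in> E \<and>
     {u1, u2} \<in> E \<and> {u2, u3} \<in> E \<and> {u3, u4} \<in> E \<and> {u4, u5} \<in> E)"

definition total_coloring ::
  "nat \<Rightarrow> 'a set \<Rightarrow> 'a set set \<Rightarrow> ('a \<Rightarrow> nat) \<Rightarrow> ('a set \<Rightarrow> nat) \<Rightarrow> bool" where
  "total_coloring k V E cv ce \<longleftrightarrow>
     (\<forall>v\<in>V. cv v \<in> {1..k}) \<and> (\<forall>e\<in>E. ce e \<in> {1..k}) \<and>
     (\<forall>x\<in>V. \<forall>y\<in>V. {x, y} \<in> E \<longrightarrow> cv x \<noteq> cv y) \<and>
     (\<forall>e\<in>E. \<forall>e'\<in>E. e \<noteq> e' \<and> e \<inter> e' \<noteq> {} \<longrightarrow> ce e \<noteq> ce e') \<and>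
     (\<forall>e\<in>E. \<forall>x\<in>e. cv x \<noteq> ce e)"

definition total_colorable :: "nat \<Rightarrow> 'a set \<Rightarrow> 'a set set \<Rightarrow> bool" where
  "total_colorable k V E \<longleftrightarrow> (\<exists>cv ce. total_coloring k V E cv ce)"

text \<open>Minimal counterexample. Competing graphs H are taken with vertices in nat
  (every finite graph is isomorphic to one on nat).\<close>
definition min_counterexample :: "'a set \<Rightarrow> 'a set set \<Rightarrow> bool" where
  "min_counterexample V E \<longleftrightarrow>
     simple_graph V E \<and> planar V E \<and> max_degree_eq V E 8 \<and> \<not> has_4fan V E \<and>
     \<not> total_colorable 9 V E \<and>
     (\<forall>(VH :: nat set) EH. simple_graph VH EH \<and> planar VH EH \<and>
        (\<forall>x\<in>VH. degree VH EH x \<le> 8) \<and> \<not> has_4fan VH EH \<and>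
        card VH + card EH < card V + card E \<longrightarrow> total_colorable 9 VH EH)"

end

theory Submission
  imports Defs
begin

text \<open>Let \<open>u\<close> (of degree 2) and \<open>w\<close> (of degree 3) be neighbours of \<open>v\<close> on 3-faces, so that
  \<open>uvx\<close> and \<open>vwy\<close> are triangles. By minimality \<open>G - uv\<close> has a total 9-colouring; forget the
  colours of \<open>u\<close> and \<open>w\<close>, which have so few neighbours that they can be recoloured at the end.
  As \<open>v\<close> has degree 8, some colour \<open>c\<close> is missing at \<open>v\<close>, and \<open>uv\<close> can take \<open>c\<close> unless \<open>c\<close> is
  the colour of \<open>ux\<close>. In that case either \<open>c\<close> can be moved onto \<open>vw\<close>, which frees the old
  colour of \<open>vw\<close> for \<open>uv\<close>, or \<open>c\<close> lies on \<open>wy\<close> or \<open>wz\<close>. Swapping the colours of \<open>ux\<close> and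
  \<open>vx\<close> produces the same situation with the colour \<open>g\<close> of \<open>vx\<close> in place of \<open>c\<close>; if \<open>g\<close> cannot
  be moved onto \<open>vw\<close> either, then \<open>wy\<close> and \<open>wz\<close> carry \<open>c\<close> and \<open>g\<close>, and in one of the two
  colourings swapping the colours of \<open>vy\<close> and \<open>wy\<close> frees at \<open>v\<close> a colour not used on \<open>ux\<close>.
  When \<open>x = w\<close> it suffices to recolour \<open>uw\<close>.

  Planarity and the absence of 4-fans enter only through minimality, which applies to
  \<open>G - uv\<close> once its vertices are relabelled by natural numbers.\<close>

section \<open>Simple graphs\<close>

lemma simple_graph_edgeD:
  assumes "simple_graph V E" "{a, b} \<in> E"
  shows "a \<in> V" "b \<in> V" "a \<noteq> b"
  using assms unfolding simple_graph_def by (auto simp: doubleton_eq_iff)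

lemma simple_graph_edges_subset_Pow:
  assumes "simple_graph V E" shows "E \<subseteq> Pow V"
proof
  fix e assume "e \<in> E"
  then obtain x y where "x \<in> V" "y \<in> V" "e = {x, y}"
    using assms unfolding simple_graph_def by blast
  then show "e \<in> Pow V" by simp
qed

lemma simple_graph_edge_at:
  assumes "simple_graph V E" "e \<in> E" "a \<in> e"
  obtains b where "{a, b} \<in> E" "e = {a, b}"
proof -
  obtain x y where "e = {x, y}" using assms(1,2) unfolding simple_graph_def by blast
  with assms(3) have "e = {a, y} \<or> e = {a, x}" by auto
  then show thesis using that assms(2) by blast
qed

lemma simple_graph_finite_edges:
  assumes "simple_graph V E" shows "finite E"
proof (rule finite_subset)
  show "E \<subseteq> Pow V" using assms by (rule simple_graph_edges_subset_Pow)
  show "finite (Pow V)" using assms unfolding simple_graph_def by simp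
qed

lemma card_edges_at_le_degree:
  assumes "simple_graph V A" "E \<subseteq> A"
  shows "card {e \<in> E. a \<in> e} \<le> degree V A a"
proof -
  have "{e \<in> E. a \<in> e} \<subseteq> (\<lambda>b. {a, b}) ` {b \<in> V. {a, b} \<in> A}"
  proof
    fix e assume "e \<in> {e \<in> E. a \<in> e}"
    then have "e \<in> A" "a \<in> e" using assms(2) by auto
    then obtain b where b: "{a, b} \<in> A" "e = {a, b}" by (rule simple_graph_edge_at[OF assms(1)])
    moreover have "b \<in> V" using b(1) by (rule simple_graph_edgeD[OF assms(1)])
    ultimately show "e \<in> (\<lambda>b. {a, b}) ` {b \<in> V. {a, b} \<in> A}" by blast
  qed
  then have "card {e \<in> E. a \<in> e} \<le> card ((\<lambda>b. {a, b}) ` {b \<in> V. {a, b} \<in> A})"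
    using assms(1) by (intro card_mono) (auto simp: simple_graph_def)
  also have "\<dots> \<le> degree V A a"
    unfolding degree_def using assms(1) by (intro card_image_le) (simp add: simple_graph_def)
  finally show ?thesis .
qed

lemma edge_at_if_degree_le:
  assumes sg: "simple_graph V E" and B: "B \<subseteq> {b \<in> V. {a, b} \<in> E}" "finite B" "degree V E a \<le> card B"
    and "e \<in> E" "a \<in> e"
  obtains b where "b \<in> B" "e = {a, b}"
proof -
  have "{b \<in> V. {a, b} \<in> E} = B"
  proof (rule card_seteq[symmetric])
    show "finite {b \<in> V. {a, b} \<in> E}" using sg unfolding simple_graph_def by simp
  qed (use B in \<open>simp_all add: degree_def\<close>)
  moreover obtain b where "{a, b} \<in> E" "e = {a, b}" using sg \<open>e \<in> E\<close> \<open>a \<in> e\<close> by (rule simple_graph_edge_at)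
  moreover have "b \<in> V" using sg \<open>{a, b} \<in> E\<close> by (rule simple_graph_edgeD)
  ultimately show thesis using that by blast
qed

lemma edges_at_degree_2:
  assumes sg: "simple_graph V E" and "degree V E u = 2" and uv: "{u, v} \<in> E" and ux: "{u, x} \<in> E"
    and "v \<noteq> x" and e: "e \<in> E" "u \<in> e"
  shows "e = {u, v} \<or> e = {u, x}"
proof -
  have "{v, x} \<subseteq> {b \<in> V. {u, b} \<in> E}" using uv ux simple_graph_edgeD[OF sg] by blast
  moreover have "degree V E u \<le> card {v, x}" using assms(2) \<open>v \<noteq> x\<close> by simp
  ultimately obtain b where "b \<in> {v, x}" "e = {u, b}" using edge_at_if_degree_le[OF sg _ _ _ e] by blast
  then show ?thesis by auto
qed

lemma edges_at_degree_3:
  assumes sg: "simple_graph V E" and deg: "degree V E w = 3" and wv: "{w, v} \<in> E" and wy: "{w, y} \<in> E"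
    and "v \<noteq> y"
  obtains z where "\<And>e. e \<in> E \<Longrightarrow> w \<in> e \<Longrightarrow> e = {w, v} \<or> e = {w, y} \<or> e = {w, z}"
proof -
  let ?N = "{b \<in> V. {w, b} \<in> E}"
  have "{v, y} \<subseteq> ?N" using wv wy simple_graph_edgeD[OF sg] by blast
  moreover have "\<not> ?N \<subseteq> {v, y}"
  proof
    assume "?N \<subseteq> {v, y}"
    then have "card ?N \<le> card {v, y}" by (intro card_mono) auto
    moreover have "card {v, y} \<le> 2" by (simp add: card_insert_if)
    ultimately show False using deg unfolding degree_def by simp
  qed
  ultimately obtain z where z: "{v, y, z} \<subseteq> ?N" "z \<notin> {v, y}" by blast
  have "e = {w, v} \<or> e = {w, y} \<or> e = {w, z}" if e: "e \<in> E" "w \<in> e" for e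
  proof -
    have "degree V E w \<le> card {v, y, z}" using deg \<open>v \<noteq> y\<close> z(2) by (auto simp: card_insert_if)
    then obtain b where "b \<in> {v, y, z}" "e = {w, b}" using edge_at_if_degree_le[OF sg z(1) _ _ e] by blast
    then show ?thesis by auto
  qed
  then show thesis by (rule that)
qed

section \<open>Edges on 3-faces lie on triangles\<close>

lemma plane_embedding_edgeD:
  assumes "plane_embedding V E pos \<gamma>" "e \<in> E"
  shows "arc (\<gamma> e)" "\<exists>x y. e = {x, y} \<and> pathstart (\<gamma> e) = pos x \<and> pathfinish (\<gamma> e) = pos y"
    "\<And>w. w \<in> V \<Longrightarrow> pos w \<in> path_image (\<gamma> e) \<Longrightarrow> w \<in> e"
  using assms unfolding plane_embedding_def by auto

lemma plane_embedding_crossingD: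
  assumes "plane_embedding V E pos \<gamma>" "e \<in> E" "e' \<in> E" "e \<noteq> e'"
  shows "path_image (\<gamma> e) \<inter> path_image (\<gamma> e') \<subseteq> pos ` (e \<inter> e')"
  using assms unfolding plane_embedding_def by auto

lemma edge_mem_of_path_image_subset:
  assumes pe: "plane_embedding V E pos \<gamma>" and "e \<in> E" "S \<subseteq> E"
    and cover: "path_image (\<gamma> e) \<subseteq> (\<Union>e'\<in>S. path_image (\<gamma> e'))"
  shows "e \<in> S"
proof (rule ccontr)
  assume "e \<notin> S"
  have "path_image (\<gamma> e) \<subseteq> pos ` e"
  proof
    fix p assume p: "p \<in> path_image (\<gamma> e)"
    then obtain e' where "e' \<in> S" "p \<in> path_image (\<gamma> e')" using cover by blast
    moreover from this(1) have "e' \<in> E" "e \<noteq> e'" using \<open>e \<notin> S\<close> \<open>S \<subseteq> E\<close> by auto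
    ultimately have "p \<in> pos ` (e \<inter> e')" using plane_embedding_crossingD[OF pe \<open>e \<in> E\<close>] p by blast
    then show "p \<in> pos ` e" by blast
  qed
  moreover obtain x y where "e = {x, y}" using plane_embedding_edgeD(2)[OF pe \<open>e \<in> E\<close>] by blast
  then have "countable (pos ` e)" by simp
  ultimately have "countable (path_image (\<gamma> e))" by (rule countable_subset)
  then show False using arc_image_uncountable[OF plane_embedding_edgeD(1)[OF pe \<open>e \<in> E\<close>]] by contradiction
qed

lemma edge_on_3face_triangle:
  assumes pe: "plane_embedding V E pos \<gamma>" and "{p, q} \<in> E" "edge_on_3face V E pos \<gamma> {p, q}"
  obtains r where "r \<noteq> p" "r \<noteq> q" "{p, r} \<in> E" "{q, r} \<in> E"
proof -
  obtain F where F: "is_3face V E pos \<gamma> F" "path_image (\<gamma> {p, q}) \<subseteq> frontier F"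
    using assms(3) unfolding edge_on_3face_def by blast
  then obtain a b c where abc: "a \<noteq> b" "b \<noteq> c" "a \<noteq> c" "{a, b} \<in> E" "{b, c} \<in> E" "{a, c} \<in> E"
    and "frontier F = path_image (\<gamma> {a, b}) \<union> path_image (\<gamma> {b, c}) \<union> path_image (\<gamma> {a, c})"
    unfolding is_3face_def by blast
  then have "{p, q} \<in> {{a, b}, {b, c}, {a, c}}"
    using edge_mem_of_path_image_subset[OF pe assms(2), of "{{a, b}, {b, c}, {a, c}}"] F(2) by auto
  then consider "{p, q} = {a, b}" | "{p, q} = {b, c}" | "{p, q} = {a, c}" by blast
  then show thesis
  proof cases
    case 1 then show thesis using that[of c] abc by (auto simp: doubleton_eq_iff insert_commute)
  next
    case 2 then show thesis using that[of a] abc by (auto simp: doubleton_eq_iff insert_commute)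
  next
    case 3 then show thesis using that[of b] abc by (auto simp: doubleton_eq_iff insert_commute)
  qed
qed

section \<open>Subgraphs of a minimal counterexample are colourable\<close>

lemma simple_graph_subset:
  assumes "simple_graph V E" "E' \<subseteq> E" shows "simple_graph V E'"
  using assms unfolding simple_graph_def by (meson subsetD)

lemma plane_embedding_subset:
  assumes "plane_embedding V E pos \<gamma>" "E' \<subseteq> E" shows "plane_embedding V E' pos \<gamma>"
  using assms unfolding plane_embedding_def by (meson subsetD)

lemma degree_subset:
  assumes "finite V" "E' \<subseteq> E" shows "degree V E' a \<le> degree V E a"
  unfolding degree_def using assms by (intro card_mono) auto

lemma has_4fan_subset:
  assumes "has_4fan V E'" "E' \<subseteq> E" shows "has_4fan V E"
  using assms unfolding has_4fan_def by (meson subsetD)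

lemma doubleton_image_mem_iff:
  assumes "inj_on f V" "E \<subseteq> Pow V" "a \<in> V" "b \<in> V"
  shows "{f a, f b} \<in> (`) f ` E \<longleftrightarrow> {a, b} \<in> E"
  using inj_on_image_mem_iff[OF inj_on_image_Pow[OF assms(1)], of "{a, b}" E] assms(2-4) by simp

lemma simple_graph_relabel:
  assumes "simple_graph V E" "inj_on f V"
  shows "simple_graph (f ` V) ((`) f ` E)"
  unfolding simple_graph_def
proof (intro conjI ballI)
  show "finite (f ` V)" using assms(1) unfolding simple_graph_def by simp
  fix e' assume "e' \<in> (`) f ` E"
  then obtain a b where "a \<in> V" "b \<in> V" "a \<noteq> b" "e' = {f a, f b}"
    using assms(1) unfolding simple_graph_def by auto
  moreover have "f a \<noteq> f b" using calculation assms(2) by (meson inj_on_contraD)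
  ultimately show "\<exists>x y. x \<in> f ` V \<and> y \<in> f ` V \<and> x \<noteq> y \<and> e' = {x, y}" by blast
qed

lemma degree_relabel:
  assumes "simple_graph V E" "inj_on f V" "a \<in> V"
  shows "degree (f ` V) ((`) f ` E) (f a) = degree V E a"
proof -
  have "{q \<in> f ` V. {f a, q} \<in> (`) f ` E} = f ` {b \<in> V. {a, b} \<in> E}"
    using doubleton_image_mem_iff[OF assms(2) simple_graph_edges_subset_Pow[OF assms(1)] assms(3)]
    by auto
  then show ?thesis
    unfolding degree_def using assms(2) by (simp add: card_image inj_on_subset)
qed

lemma has_4fan_relabelD:
  assumes "has_4fan (f ` V) ((`) f ` E)" "inj_on f V" "E \<subseteq> Pow V"
  shows "has_4fan V E"
proof -
  define g where "g = inv_into V f"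
  have fg: "f (g p) = p" and gV: "g p \<in> V" if "p \<in> f ` V" for p
    using that unfolding g_def by (auto simp: f_inv_into_f inv_into_into)
  have edge: "{g p, g q} \<in> E" if "p \<in> f ` V" "q \<in> f ` V" "{p, q} \<in> (`) f ` E" for p q
    using that doubleton_image_mem_iff[OF assms(2,3) gV gV] fg by simp
  obtain c u1 u2 u3 u4 u5 where fan: "distinct [c, u1, u2, u3, u4, u5]" "set [c, u1, u2, u3, u4, u5] \<subseteq> f ` V"
    "{c, u1} \<in> (`) f ` E" "{c, u2} \<in> (`) f ` E" "{c, u3} \<in> (`) f ` E" "{c, u4} \<in> (`) f ` E"
    "{c, u5} \<in> (`) f ` E" "{u1, u2} \<in> (`) f ` E" "{u2, u3} \<in> (`) f ` E" "{u3, u4} \<in> (`) f ` E"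
    "{u4, u5} \<in> (`) f ` E"
    using assms(1) unfolding has_4fan_def by (elim exE conjE) (rule that)
  have "inj_on g (f ` V)" unfolding g_def by (rule inj_on_inv_into) simp
  then have "inj_on g (set [c, u1, u2, u3, u4, u5])" using fan(2) by (rule inj_on_subset)
  then have "distinct (map g [c, u1, u2, u3, u4, u5])"
    unfolding distinct_map using fan(1) by blast
  then have "distinct [g c, g u1, g u2, g u3, g u4, g u5]" by simp
  moreover have mem: "c \<in> f ` V" "u1 \<in> f ` V" "u2 \<in> f ` V" "u3 \<in> f ` V" "u4 \<in> f ` V" "u5 \<in> f ` V"
    using fan(2) by simp_all
  then have "set [g c, g u1, g u2, g u3, g u4, g u5] \<subseteq> V" using gV by simp
  moreover have "{g c, g u1} \<in> E" "{g c, g u2} \<in> E" "{g c, g u3} \<in> E" "{g c, g u4} \<in> E"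
    "{g c, g u5} \<in> E" "{g u1, g u2} \<in> E" "{g u2, g u3} \<in> E" "{g u3, g u4} \<in> E" "{g u4, g u5} \<in> E"
    using edge[OF mem(1,2) fan(3)] edge[OF mem(1,3) fan(4)] edge[OF mem(1,4) fan(5)]
      edge[OF mem(1,5) fan(6)] edge[OF mem(1,6) fan(7)] edge[OF mem(2,3) fan(8)]
      edge[OF mem(3,4) fan(9)] edge[OF mem(4,5) fan(10)] edge[OF mem(5,6) fan(11)] .
  ultimately show ?thesis unfolding has_4fan_def by (intro exI conjI) assumption+
qed

lemma total_coloring_relabelD:
  assumes col: "total_coloring k (f ` V) ((`) f ` E) cv ce" and "inj_on f V" "E \<subseteq> Pow V"
  shows "total_coloring k V E (cv \<circ> f) (\<lambda>e. ce (f ` e))"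
  unfolding total_coloring_def
proof (intro conjI ballI impI)
  fix a b assume "a \<in> V" "b \<in> V" "{a, b} \<in> E"
  then show "(cv \<circ> f) a \<noteq> (cv \<circ> f) b"
    using col doubleton_image_mem_iff[OF assms(2,3)] unfolding total_coloring_def by simp
next
  fix e e' assume e: "e \<in> E" "e' \<in> E" "e \<noteq> e' \<and> e \<inter> e' \<noteq> {}"
  then have "f ` e \<noteq> f ` e'" using inj_onD[OF inj_on_image_Pow[OF assms(2)]] assms(3) by blast
  moreover have "f ` e \<inter> f ` e' \<noteq> {}" using e by blast
  ultimately show "ce (f ` e) \<noteq> ce (f ` e')" using col e(1,2) unfolding total_coloring_def by simp
qed (use col in \<open>auto simp: total_coloring_def\<close>)

lemma plane_embedding_relabel_edge:
  assumes pe: "plane_embedding V E pos \<gamma>" and sg: "simple_graph V E" and inj: "inj_on f V"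
    and "e' \<in> (`) f ` E"
  shows "arc (\<gamma> (inv_into V f ` e')) \<and>
    (\<exists>x y. e' = {x, y} \<and> pathstart (\<gamma> (inv_into V f ` e')) = (pos \<circ> inv_into V f) x \<and>
      pathfinish (\<gamma> (inv_into V f ` e')) = (pos \<circ> inv_into V f) y) \<and>
    (\<forall>w\<in>f ` V. (pos \<circ> inv_into V f) w \<in> path_image (\<gamma> (inv_into V f ` e')) \<longrightarrow> w \<in> e')"
proof -
  obtain e where e: "e \<in> E" "e' = f ` e" using \<open>e' \<in> (`) f ` E\<close> by blast
  then have "inv_into V f ` e' = e"
    using inv_into_image_cancel[OF inj] simple_graph_edges_subset_Pow[OF sg] by blast
  moreover have "arc (\<gamma> e)" using pe e(1) by (rule plane_embedding_edgeD)
  moreover obtain x y where xy: "e = {x, y}" "pathstart (\<gamma> e) = pos x" "pathfinish (\<gamma> e) = pos y"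
    using plane_embedding_edgeD(2)[OF pe e(1)] by blast
  moreover have "x \<in> V" "y \<in> V" using xy(1) e(1) sg by (auto dest: simple_graph_edgeD)
  moreover have "w \<in> e'" if w: "w \<in> f ` V" "pos (inv_into V f w) \<in> path_image (\<gamma> e)" for w
  proof -
    obtain a where a: "a \<in> V" "w = f a" using w(1) by blast
    then have "pos a \<in> path_image (\<gamma> e)" using w(2) inj by simp
    then have "a \<in> e" by (rule plane_embedding_edgeD(3)[OF pe e(1) a(1)])
    then show "w \<in> e'" using a e by simp
  qed
  ultimately show ?thesis using e(2) inj by (intro conjI exI[of _ "f x"] exI[of _ "f y"]) auto
qed

lemma plane_embedding_relabel:
  assumes pe: "plane_embedding V E pos \<gamma>" and sg: "simple_graph V E" and inj: "inj_on f V"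
  shows "plane_embedding (f ` V) ((`) f ` E) (pos \<circ> inv_into V f) (\<lambda>e. \<gamma> (inv_into V f ` e))"
  unfolding plane_embedding_def
proof (intro conjI)
  let ?g = "inv_into V f"
  show "inj_on (pos \<circ> ?g) (f ` V)"
  proof (rule comp_inj_on)
    show "inj_on ?g (f ` V)" by (rule inj_on_inv_into) simp
    show "inj_on pos (?g ` f ` V)" using pe inv_into_image_cancel[OF inj] unfolding plane_embedding_def by simp
  qed
  show "\<forall>e'\<in>(`) f ` E. \<forall>e''\<in>(`) f ` E. e' \<noteq> e'' \<longrightarrow>
      path_image (\<gamma> (?g ` e')) \<inter> path_image (\<gamma> (?g ` e'')) \<subseteq> (pos \<circ> ?g) ` (e' \<inter> e'')"
  proof (intro ballI impI)
    fix e' e'' assume "e' \<in> (`) f ` E" "e'' \<in> (`) f ` E" "e' \<noteq> e''"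
    then obtain e0 e1 where e: "e0 \<in> E" "e1 \<in> E" "e' = f ` e0" "e'' = f ` e1" "e0 \<noteq> e1" by blast
    have "e0 \<subseteq> V" "e1 \<subseteq> V" using simple_graph_edges_subset_Pow[OF sg] e(1,2) by auto
    then have "?g ` e' = e0" "?g ` e'' = e1" using inv_into_image_cancel[OF inj] e(3,4) by blast+
    then have "path_image (\<gamma> (?g ` e')) \<inter> path_image (\<gamma> (?g ` e'')) \<subseteq> pos ` (e0 \<inter> e1)"
      using plane_embedding_crossingD[OF pe e(1,2,5)] by simp
    also have "\<dots> \<subseteq> (pos \<circ> ?g) ` (e' \<inter> e'')"
    proof
      fix p assume "p \<in> pos ` (e0 \<inter> e1)"
      then obtain a where a: "a \<in> e0" "a \<in> e1" "p = pos a" by blast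
      then have "p = (pos \<circ> ?g) (f a)" using \<open>e0 \<subseteq> V\<close> inj by auto
      moreover have "f a \<in> e' \<inter> e''" using a e by simp
      ultimately show "p \<in> (pos \<circ> ?g) ` (e' \<inter> e'')" by (rule image_eqI)
    qed
    finally show "path_image (\<gamma> (?g ` e')) \<inter> path_image (\<gamma> (?g ` e'')) \<subseteq> (pos \<circ> ?g) ` (e' \<inter> e'')" .
  qed
qed (use plane_embedding_relabel_edge[OF pe sg inj] in blast)

lemma min_counterexample_subgraph_total_colorable:
  assumes min: "min_counterexample V E" and sub: "E' \<subset> E"
  shows "total_colorable 9 V E'"
proof -
  have sg: "simple_graph V E" and "planar V E" and deg: "\<forall>a\<in>V. degree V E a \<le> 8"
    and no_fan: "\<not> has_4fan V E"
    and smaller: "\<And>(VH :: nat set) EH. simple_graph VH EH \<Longrightarrow> planar VH EH \<Longrightarrow>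
        \<forall>x\<in>VH. degree VH EH x \<le> 8 \<Longrightarrow> \<not> has_4fan VH EH \<Longrightarrow>
        card VH + card EH < card V + card E \<Longrightarrow> total_colorable 9 VH EH"
    using min unfolding min_counterexample_def max_degree_eq_def by auto
  then obtain pos \<gamma> where pe: "plane_embedding V E' pos \<gamma>"
    using sub unfolding planar_def by (meson plane_embedding_subset psubset_imp_subset)
  have sg': "simple_graph V E'" using sg psubset_imp_subset[OF sub] by (rule simple_graph_subset)
  have Pow: "E' \<subseteq> Pow V" using sg' by (rule simple_graph_edges_subset_Pow)
  have "finite V" using sg unfolding simple_graph_def by simp
  then obtain f :: "'a \<Rightarrow> nat" where inj: "inj_on f V" by (meson finite_imp_inj_to_nat_seg)
  have "total_colorable 9 (f ` V) ((`) f ` E')"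
  proof (rule smaller)
    show "simple_graph (f ` V) ((`) f ` E')" using sg' inj by (rule simple_graph_relabel)
    show "planar (f ` V) ((`) f ` E')"
      unfolding planar_def using plane_embedding_relabel[OF pe sg' inj] by blast
    show "\<forall>p\<in>f ` V. degree (f ` V) ((`) f ` E') p \<le> 8"
    proof
      fix p assume "p \<in> f ` V"
      then obtain a where a: "a \<in> V" "p = f a" by blast
      then have "degree (f ` V) ((`) f ` E') p = degree V E' a" using degree_relabel[OF sg' inj] by simp
      also have "\<dots> \<le> degree V E a" using \<open>finite V\<close> psubset_imp_subset[OF sub] by (rule degree_subset)
      also have "\<dots> \<le> 8" using deg a(1) by simp
      finally show "degree (f ` V) ((`) f ` E') p \<le> 8" .
    qed
    show "\<not> has_4fan (f ` V) ((`) f ` E')"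
      using no_fan has_4fan_relabelD[OF _ inj Pow] has_4fan_subset[OF _ psubset_imp_subset[OF sub]]
      by blast
    have "card ((`) f ` E') = card E'"
      using inj_on_subset[OF inj_on_image_Pow[OF inj] Pow] by (rule card_image)
    moreover have "card E' < card E" using simple_graph_finite_edges[OF sg] sub by (rule psubset_card_mono)
    ultimately show "card (f ` V) + card ((`) f ` E') < card V + card E"
      using card_image[OF inj] by simp
  qed
  then show ?thesis
    unfolding total_colorable_def using total_coloring_relabelD[OF _ inj Pow] by blast
qed

section \<open>Partial total colourings\<close>

text \<open>A total colouring of the graph \<open>(V, A)\<close> in which the vertices of \<open>U\<close> and the edges of
  \<open>A - E\<close> are still uncoloured.\<close>

definition partial_total_coloring ::
  "nat \<Rightarrow> 'a set \<Rightarrow> 'a set set \<Rightarrow> 'a set set \<Rightarrow> 'a set \<Rightarrow> ('a \<Rightarrow> nat) \<Rightarrow> ('a set \<Rightarrow> nat) \<Rightarrow> bool" where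
  "partial_total_coloring k V A E U cv ce \<longleftrightarrow>
     (\<forall>a\<in>V - U. cv a \<in> {1..k}) \<and> (\<forall>e\<in>E. ce e \<in> {1..k}) \<and>
     (\<forall>a\<in>V - U. \<forall>b\<in>V - U. {a, b} \<in> A \<longrightarrow> cv a \<noteq> cv b) \<and>
     (\<forall>e\<in>E. \<forall>e'\<in>E. e \<noteq> e' \<and> e \<inter> e' \<noteq> {} \<longrightarrow> ce e \<noteq> ce e') \<and>
     (\<forall>e\<in>E. \<forall>a\<in>e - U. cv a \<noteq> ce e)"

definition missing_color :: "'a set set \<Rightarrow> 'a set \<Rightarrow> ('a \<Rightarrow> nat) \<Rightarrow> ('a set \<Rightarrow> nat) \<Rightarrow> 'a \<Rightarrow> nat \<Rightarrow> bool" where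
  "missing_color E U cv ce a c \<longleftrightarrow> (a \<notin> U \<longrightarrow> cv a \<noteq> c) \<and> (\<forall>e\<in>E. a \<in> e \<longrightarrow> ce e \<noteq> c)"

lemma partial_total_coloring_edge_color:
  "partial_total_coloring k V A E U cv ce \<Longrightarrow> e \<in> E \<Longrightarrow> ce e \<in> {1..k}"
  unfolding partial_total_coloring_def by simp

lemma partial_total_coloring_proper_edges:
  assumes "partial_total_coloring k V A E U cv ce" "e \<in> E" "e' \<in> E" "e \<noteq> e'" "a \<in> e" "a \<in> e'"
  shows "ce e \<noteq> ce e'"
proof -
  have "\<forall>e\<in>E. \<forall>e'\<in>E. e \<noteq> e' \<and> e \<inter> e' \<noteq> {} \<longrightarrow> ce e \<noteq> ce e'"
    using assms(1) unfolding partial_total_coloring_def by simp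
  then show ?thesis using assms(2-6) by blast
qed

lemma missing_color_edgeD: "missing_color E U cv ce a c \<Longrightarrow> e \<in> E \<Longrightarrow> a \<in> e \<Longrightarrow> ce e \<noteq> c"
  unfolding missing_color_def by simp

lemma total_coloring_imp_partial:
  assumes "total_coloring k V E cv ce" "\<And>a b. {a, b} \<in> A - E \<Longrightarrow> a \<in> U \<or> b \<in> U"
  shows "partial_total_coloring k V A E U cv ce"
  unfolding partial_total_coloring_def
proof (intro conjI ballI impI)
  fix a b assume ab: "a \<in> V - U" "b \<in> V - U" "{a, b} \<in> A"
  then have "{a, b} \<in> E" using assms(2) by blast
  then show "cv a \<noteq> cv b" using assms(1) ab unfolding total_coloring_def by simp
qed (use assms(1) in \<open>auto simp: total_coloring_def\<close>)

lemma partial_total_coloring_imp_total: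
  "partial_total_coloring k V E E {} cv ce \<Longrightarrow> total_coloring k V E cv ce"
  unfolding total_coloring_def partial_total_coloring_def by simp

lemma partial_total_coloring_subset:
  "partial_total_coloring k V A E U cv ce \<Longrightarrow> E0 \<subseteq> E \<Longrightarrow> partial_total_coloring k V A E0 U cv ce"
  unfolding partial_total_coloring_def by (meson subsetD)

lemma missing_color_subset:
  "missing_color E U cv ce a c \<Longrightarrow> E0 \<subseteq> E \<Longrightarrow> missing_color E0 U cv ce a c"
  unfolding missing_color_def by auto

lemma missing_color_remove_edge:
  assumes "partial_total_coloring k V A E U cv ce" "e \<in> E" "a \<in> e"
  shows "missing_color (E - {e}) U cv ce a (ce e)"
  unfolding missing_color_def
proof (intro conjI impI ballI)
  show "a \<notin> U \<Longrightarrow> cv a \<noteq> ce e" using assms unfolding partial_total_coloring_def by auto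
  fix e' assume "e' \<in> E - {e}" "a \<in> e'"
  then show "ce e' \<noteq> ce e" using partial_total_coloring_proper_edges[OF assms(1)] assms(2,3) by blast
qed

lemma missing_color_update:
  assumes "missing_color (E - {e}) U cv ce a c" "a \<in> e \<Longrightarrow> c' \<noteq> c"
  shows "missing_color E U cv (ce(e := c')) a c"
  unfolding missing_color_def
proof (intro conjI impI ballI)
  show "a \<notin> U \<Longrightarrow> cv a \<noteq> c" using assms(1) unfolding missing_color_def by simp
  fix e' assume "e' \<in> E" "a \<in> e'"
  then show "(ce(e := c')) e' \<noteq> c"
    using assms missing_color_edgeD[OF assms(1)] by (cases "e' = e") auto
qed

lemma partial_total_coloring_insert_edge:
  assumes col: "partial_total_coloring k V A (E - {{a, b}}) U cv ce" and c: "c \<in> {1..k}"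
    and ma: "missing_color (E - {{a, b}}) U cv ce a c" and mb: "missing_color (E - {{a, b}}) U cv ce b c"
  shows "partial_total_coloring k V A E U cv (ce({a, b} := c))"
  unfolding partial_total_coloring_def
proof (intro conjI ballI impI)
  have avoid: "ce e \<noteq> c" if "e \<in> E - {{a, b}}" "a \<in> e \<or> b \<in> e" for e
    using that missing_color_edgeD[OF ma] missing_color_edgeD[OF mb] by blast
  fix e assume e: "e \<in> E"
  show "(ce({a, b} := c)) e \<in> {1..k}"
    using c e partial_total_coloring_edge_color[OF col] by (cases "e = {a, b}") auto
  show "cv x \<noteq> (ce({a, b} := c)) e" if "x \<in> e - U" for x
  proof (cases "e = {a, b}")
    case True
    then show ?thesis using that ma mb unfolding missing_color_def by auto
  next
    case False
    then show ?thesis using that e col unfolding partial_total_coloring_def by auto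
  qed
  fix e' assume e': "e' \<in> E" and ee': "e \<noteq> e' \<and> e \<inter> e' \<noteq> {}"
  then obtain p where p: "p \<in> e" "p \<in> e'" by blast
  show "(ce({a, b} := c)) e \<noteq> (ce({a, b} := c)) e'"
  proof (cases "e = {a, b}")
    case True
    then show ?thesis using avoid[of e'] e' ee' p by auto
  next
    case False
    show ?thesis
    proof (cases "e' = {a, b}")
      case True
      then show ?thesis using avoid[of e] e \<open>e \<noteq> {a, b}\<close> p by auto
    next
      case False
      then show ?thesis
        using \<open>e \<noteq> {a, b}\<close> e e' ee' p partial_total_coloring_proper_edges[OF col] by auto
    qed
  qed
qed (use col in \<open>auto simp: partial_total_coloring_def\<close>)

lemma partial_total_coloring_recolor_edge:
  assumes col: "partial_total_coloring k V A E U cv ce" and ab: "{a, b} \<in> E" and c: "c \<in> {1..k}"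
    and ma: "missing_color E U cv ce a c" and mb: "missing_color (E - {{a, b}}) U cv ce b c"
  shows "partial_total_coloring k V A E U cv (ce({a, b} := c))"
    and "p \<in> {a, b} \<Longrightarrow> missing_color E U cv (ce({a, b} := c)) p (ce {a, b})"
proof -
  have "partial_total_coloring k V A (E - {{a, b}}) U cv ce"
    using col by (rule partial_total_coloring_subset) blast
  then show "partial_total_coloring k V A E U cv (ce({a, b} := c))"
    using c missing_color_subset[OF ma] mb by (rule partial_total_coloring_insert_edge) auto
  have "c \<noteq> ce {a, b}" using missing_color_edgeD[OF ma ab] by simp
  then show "missing_color E U cv (ce({a, b} := c)) p (ce {a, b})" if "p \<in> {a, b}"
    using that by (intro missing_color_update[OF missing_color_remove_edge[OF col ab]]) auto
qed

lemma partial_total_coloring_swap_edges: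
  assumes col: "partial_total_coloring k V A E U cv ce" and vx: "{v, x} \<in> E" and tx: "{t, x} \<in> E"
    and "v \<noteq> x" "v \<noteq> t"
    and mv: "missing_color E U cv ce v (ce {t, x})"
    and mt: "missing_color (E - {{t, x}} - {{v, x}}) U cv ce t (ce {v, x})"
  shows "partial_total_coloring k V A E U cv (ce({v, x} := ce {t, x}, {t, x} := ce {v, x}))"
    and "missing_color E U cv (ce({v, x} := ce {t, x}, {t, x} := ce {v, x})) v (ce {v, x})"
proof -
  let ?E = "E - {{t, x}}" and ?ce = "ce({v, x} := ce {t, x})"
  have "{v, x} \<noteq> {t, x}" using \<open>v \<noteq> x\<close> \<open>v \<noteq> t\<close> by (auto simp: doubleton_eq_iff)
  then have vx': "{v, x} \<in> ?E" using vx by blast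
  have "partial_total_coloring k V A ?E U cv ce" using col by (rule partial_total_coloring_subset) blast
  moreover have "ce {t, x} \<in> {1..k}" using col tx by (rule partial_total_coloring_edge_color)
  moreover have "missing_color ?E U cv ce v (ce {t, x})" using mv by (rule missing_color_subset) blast
  moreover have "missing_color (?E - {{v, x}}) U cv ce x (ce {t, x})"
    using missing_color_remove_edge[OF col tx] by (rule missing_color_subset) auto
  ultimately have col': "partial_total_coloring k V A ?E U cv ?ce"
    and freed: "\<And>p. p \<in> {v, x} \<Longrightarrow> missing_color ?E U cv ?ce p (ce {v, x})"
    using partial_total_coloring_recolor_edge[OF _ vx'] by blast+
  have "ce {t, x} \<noteq> ce {v, x}" using missing_color_edgeD[OF mv vx] by simp
  then have "missing_color ?E U cv ?ce t (ce {v, x})" by (intro missing_color_update[OF mt]) auto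
  then show "partial_total_coloring k V A E U cv (?ce({t, x} := ce {v, x}))"
    using partial_total_coloring_edge_color[OF col vx] freed[of x]
    by (intro partial_total_coloring_insert_edge[OF col']) auto
  have "missing_color ?E U cv ?ce v (ce {v, x})" using freed by simp
  then show "missing_color E U cv (?ce({t, x} := ce {v, x})) v (ce {v, x})"
    by (rule missing_color_update) (use \<open>v \<noteq> x\<close> \<open>v \<noteq> t\<close> in auto)
qed

lemma ex_color_not_in:
  assumes "finite X" "card X < k"
  shows "\<exists>c\<in>{1..k}. c \<notin> X"
proof (rule ccontr)
  assume "\<not> ?thesis"
  then have "card {1..k} \<le> card X" by (intro card_mono[OF assms(1)]) auto
  then show False using assms(2) by simp
qed

lemma ex_missing_color:
  assumes "finite F" "finite {e \<in> E. a \<in> e}" "card F + card {e \<in> E. a \<in> e} + 1 < k"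
  obtains c where "c \<in> {1..k}" "c \<notin> F" "missing_color E U cv ce a c"
proof -
  let ?X = "F \<union> {cv a} \<union> ce ` {e \<in> E. a \<in> e}"
  have "card ?X \<le> card (F \<union> {cv a}) + card (ce ` {e \<in> E. a \<in> e})" by (rule card_Un_le)
  also have "\<dots> \<le> card F + 1 + card {e \<in> E. a \<in> e}"
    using card_Un_le[of F "{cv a}"] card_image_le[OF assms(2), of ce] by simp
  finally have "card ?X < k" using assms(3) by linarith
  moreover have "finite ?X" using assms(1,2) by (intro finite_UnI finite_imageI) auto
  ultimately have "\<exists>c\<in>{1..k}. c \<notin> ?X" by (intro ex_color_not_in)
  then obtain c where "c \<in> {1..k}" "c \<notin> ?X" ..
  then show thesis using that unfolding missing_color_def by auto
qed

lemma partial_total_coloring_color_vertex: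
  assumes col: "partial_total_coloring k V A E (insert a U) cv ce"
    and sg: "simple_graph V A" and "E \<subseteq> A" and deg: "2 * degree V A a < k"
  obtains c where "partial_total_coloring k V A E U (cv(a := c)) ce"
proof -
  let ?N = "{b \<in> V. {a, b} \<in> A}" and ?Ea = "{e \<in> E. a \<in> e}"
  have fin: "finite ?N" "finite ?Ea"
    using sg simple_graph_finite_edges[OF sg] \<open>E \<subseteq> A\<close> unfolding simple_graph_def by (auto intro: finite_subset)
  have "card (cv ` ?N \<union> ce ` ?Ea) \<le> card (cv ` ?N) + card (ce ` ?Ea)" by (rule card_Un_le)
  also have "\<dots> \<le> card ?N + card ?Ea" using card_image_le[OF fin(1)] card_image_le[OF fin(2)] by (rule add_mono)
  also have "\<dots> \<le> degree V A a + degree V A a"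
    using card_edges_at_le_degree[OF sg \<open>E \<subseteq> A\<close>, of a] unfolding degree_def by simp
  finally have "card (cv ` ?N \<union> ce ` ?Ea) < k" using deg by linarith
  moreover have "finite (cv ` ?N \<union> ce ` ?Ea)" using fin by (intro finite_UnI finite_imageI)
  ultimately have "\<exists>c\<in>{1..k}. c \<notin> cv ` ?N \<union> ce ` ?Ea" by (intro ex_color_not_in)
  then obtain c where c: "c \<in> {1..k}" "c \<notin> cv ` ?N \<union> ce ` ?Ea" ..
  have "partial_total_coloring k V A E U (cv(a := c)) ce"
    unfolding partial_total_coloring_def
  proof (intro conjI ballI impI)
    fix x y assume xy: "x \<in> V - U" "y \<in> V - U" "{x, y} \<in> A"
    then have "x \<noteq> y" using simple_graph_edgeD(3)[OF sg] by blast
    then show "(cv(a := c)) x \<noteq> (cv(a := c)) y"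
      using xy c col unfolding partial_total_coloring_def by (auto simp: insert_commute)
  qed (use c col in \<open>auto simp: partial_total_coloring_def\<close>)
  then show thesis by (rule that)
qed

lemma total_colorable_if_partial_low_degree:
  assumes sg: "simple_graph V A" and "finite U" "\<forall>a\<in>U. 2 * degree V A a < k"
    and "partial_total_coloring k V A A U cv ce"
  shows "total_colorable k V A"
  using assms(2-4)
proof (induction U arbitrary: cv rule: finite_induct)
  case empty
  then show ?case unfolding total_colorable_def by (blast dest: partial_total_coloring_imp_total)
next
  case (insert a U)
  obtain c where "partial_total_coloring k V A A U (cv(a := c)) ce"
    using partial_total_coloring_color_vertex[OF insert.prems(2) sg subset_refl] insert.prems(1) by auto
  then show ?case using insert.IH insert.prems(1) by blast
qed

lemma ex_missing_color_remove_edge: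
  assumes sg: "simple_graph V E" and "{u, v} \<in> E" and "degree V E v < k"
  obtains c where "c \<in> {1..k}" "missing_color (E - {{u, v}}) U cv ce v c"
proof -
  have fin: "finite {e \<in> E - {{u, v}}. v \<in> e}" using simple_graph_finite_edges[OF sg] by simp
  have "{e \<in> E. v \<in> e} = insert {u, v} {e \<in> E - {{u, v}}. v \<in> e}" using \<open>{u, v} \<in> E\<close> by auto
  then have "card {e \<in> E - {{u, v}}. v \<in> e} + 1 = card {e \<in> E. v \<in> e}" using fin by simp
  also have "\<dots> \<le> degree V E v" using sg by (rule card_edges_at_le_degree) simp
  finally show thesis
    using ex_missing_color[of "{}" "E - {{u, v}}" v k U cv ce] fin \<open>degree V E v < k\<close> that by auto
qed

section \<open>Colouring the edge \<open>uv\<close>\<close>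

locale deg2_deg3_configuration =
  fixes V :: "'a set" and E :: "'a set set" and u v w x y z :: 'a
  assumes simple: "simple_graph V E"
    and edges: "{u, v} \<in> E" "{u, x} \<in> E" "{v, x} \<in> E" "{v, w} \<in> E" "{v, y} \<in> E" "{w, y} \<in> E"
    and edges_at_u: "\<And>e. e \<in> E \<Longrightarrow> u \<in> e \<Longrightarrow> e = {u, v} \<or> e = {u, x}"
    and edges_at_w: "\<And>e. e \<in> E \<Longrightarrow> w \<in> e \<Longrightarrow> e = {v, w} \<or> e = {w, y} \<or> e = {w, z}"
    and u_neq_w: "u \<noteq> w" and w_neq_x: "w \<noteq> x"
begin

lemma vertices_distinct: "u \<noteq> v" "u \<noteq> x" "v \<noteq> x" "v \<noteq> w" "v \<noteq> y" "w \<noteq> y" "u \<noteq> w" "w \<noteq> x" "u \<noteq> y"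
proof -
  show "u \<noteq> v" "u \<noteq> x" "v \<noteq> x" "v \<noteq> w" "v \<noteq> y" "w \<noteq> y"
    using simple_graph_edgeD(3)[OF simple] edges by blast+
  show "u \<noteq> w" "w \<noteq> x" using u_neq_w w_neq_x .
  show "u \<noteq> y"
  proof
    assume "u = y"
    then have "{w, y} = {u, v} \<or> {w, y} = {u, x}" using edges_at_u edges(6) by blast
    then show False using \<open>u = y\<close> \<open>u \<noteq> w\<close> \<open>w \<noteq> x\<close> \<open>v \<noteq> w\<close> by (auto simp: doubleton_eq_iff)
  qed
qed

lemma edges_remaining:
  "{u, x} \<in> E - {{u, v}}" "{v, x} \<in> E - {{u, v}}" "{v, w} \<in> E - {{u, v}}"
  "{v, y} \<in> E - {{u, v}}" "{w, y} \<in> E - {{u, v}}"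
  using edges vertices_distinct by (auto simp: doubleton_eq_iff)

lemma extend_uv:
  assumes col: "partial_total_coloring k V E (E - {{u, v}}) {u, w} cv ce" and c: "c \<in> {1..k}"
    and mv: "missing_color (E - {{u, v}}) {u, w} cv ce v c" and "ce {u, x} \<noteq> c"
  shows "\<exists>ce'. partial_total_coloring k V E E {u, w} cv ce'"
proof -
  have "missing_color (E - {{u, v}}) {u, w} cv ce u c"
    unfolding missing_color_def using edges_at_u \<open>ce {u, x} \<noteq> c\<close> by auto
  then show ?thesis using partial_total_coloring_insert_edge[OF col c _ mv] by blast
qed

lemma extend_uv_recolor_vw:
  assumes col: "partial_total_coloring k V E (E - {{u, v}}) {u, w} cv ce" and c: "c \<in> {1..k}"
    and mv: "missing_color (E - {{u, v}}) {u, w} cv ce v c" and ux: "ce {u, x} = c"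
    and mw: "missing_color (E - {{u, v}} - {{v, w}}) {u, w} cv ce w c"
  shows "\<exists>ce'. partial_total_coloring k V E E {u, w} cv ce'"
proof (rule extend_uv)
  show "partial_total_coloring k V E (E - {{u, v}}) {u, w} cv (ce({v, w} := c))"
    and "missing_color (E - {{u, v}}) {u, w} cv (ce({v, w} := c)) v (ce {v, w})"
    using partial_total_coloring_recolor_edge[OF col edges_remaining(3) c mv mw] by auto
  show "ce {v, w} \<in> {1..k}" using col edges_remaining(3) by (rule partial_total_coloring_edge_color)
  have "{u, x} \<noteq> {v, w}" using vertices_distinct by (auto simp: doubleton_eq_iff)
  then show "(ce({v, w} := c)) {u, x} \<noteq> ce {v, w}"
    using ux missing_color_edgeD[OF mv edges_remaining(3)] by simp
qed

lemma extend_uv_swap_vy_wy: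
  assumes col: "partial_total_coloring k V E (E - {{u, v}}) {u, w} cv ce" and c: "c \<in> {1..k}"
    and mv: "missing_color (E - {{u, v}}) {u, w} cv ce v c" and ux: "ce {u, x} = c"
    and wy: "ce {w, y} = c" and wz: "ce {w, z} = ce {v, x}"
  shows "\<exists>ce'. partial_total_coloring k V E E {u, w} cv ce'"
proof -
  let ?ce = "ce({v, y} := ce {w, y}, {w, y} := ce {v, y})"
  have "x \<noteq> y"
  proof
    assume "x = y"
    moreover have "{w, y} \<noteq> {u, x}" using vertices_distinct by (auto simp: doubleton_eq_iff)
    ultimately have "ce {w, y} \<noteq> ce {u, x}"
      by (intro partial_total_coloring_proper_edges[OF col edges_remaining(5,1), where a = x]) simp_all
    then show False using ux wy by simp
  qed
  then have "{v, x} \<noteq> {v, y}" by (auto simp: doubleton_eq_iff)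
  then have vx_vy: "ce {v, x} \<noteq> ce {v, y}"
    by (rule partial_total_coloring_proper_edges[OF col edges_remaining(2,4), where a = v]) simp_all
  have "{v, w} \<noteq> {v, y}" using vertices_distinct by (auto simp: doubleton_eq_iff)
  then have vw_vy: "ce {v, w} \<noteq> ce {v, y}"
    by (rule partial_total_coloring_proper_edges[OF col edges_remaining(3,4), where a = v]) simp_all
  have "missing_color (E - {{u, v}} - {{w, y}} - {{v, y}}) {u, w} cv ce w (ce {v, y})"
    unfolding missing_color_def
  proof (intro conjI impI ballI)
    fix e assume "e \<in> E - {{u, v}} - {{w, y}} - {{v, y}}" "w \<in> e"
    then have "e = {v, w} \<or> e = {w, z}" using edges_at_w[of e] by auto
    then show "ce e \<noteq> ce {v, y}" using vw_vy vx_vy wz by auto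
  qed simp
  then have col': "partial_total_coloring k V E (E - {{u, v}}) {u, w} cv ?ce"
    and mv': "missing_color (E - {{u, v}}) {u, w} cv ?ce v (ce {v, y})"
    using partial_total_coloring_swap_edges[OF col edges_remaining(4,5) vertices_distinct(5,4)] mv wy by auto
  show ?thesis
  proof (rule extend_uv[OF col' _ mv'])
    show "ce {v, y} \<in> {1..k}" using col edges_remaining(4) by (rule partial_total_coloring_edge_color)
    have "{u, x} \<noteq> {v, y}" "{u, x} \<noteq> {w, y}" using vertices_distinct by (auto simp: doubleton_eq_iff)
    then show "?ce {u, x} \<noteq> ce {v, y}" using ux missing_color_edgeD[OF mv edges_remaining(4)] by simp
  qed
qed

lemma not_missing_at_w:
  assumes "\<not> missing_color (E - {{u, v}} - {{v, w}}) {u, w} cv ce w c"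
  shows "ce {w, y} = c \<or> ce {w, z} = c"
proof (rule ccontr)
  assume neither: "\<not> ?thesis"
  have "missing_color (E - {{u, v}} - {{v, w}}) {u, w} cv ce w c"
    unfolding missing_color_def
  proof (intro conjI impI ballI)
    fix e assume "e \<in> E - {{u, v}} - {{v, w}}" "w \<in> e"
    then have "e = {w, y} \<or> e = {w, z}" using edges_at_w[of e] by (auto simp: insert_commute)
    then show "ce e \<noteq> c" using neither by auto
  qed simp
  then show False using assms by contradiction
qed

lemma swap_ux_vx:
  assumes col: "partial_total_coloring k V E (E - {{u, v}}) {u, w} cv ce"
    and mv: "missing_color (E - {{u, v}}) {u, w} cv ce v c" and ux: "ce {u, x} = c"
  shows "partial_total_coloring k V E (E - {{u, v}}) {u, w} cv (ce({v, x} := c, {u, x} := ce {v, x}))"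
    and "missing_color (E - {{u, v}}) {u, w} cv (ce({v, x} := c, {u, x} := ce {v, x})) v (ce {v, x})"
    and "(ce({v, x} := c, {u, x} := ce {v, x})) {u, x} = ce {v, x}"
    and "(ce({v, x} := c, {u, x} := ce {v, x})) {v, x} = c"
    and "(ce({v, x} := c, {u, x} := ce {v, x})) {w, y} = ce {w, y}"
    and "(ce({v, x} := c, {u, x} := ce {v, x})) {w, z} = ce {w, z}"
proof -
  have "missing_color (E - {{u, v}} - {{u, x}} - {{v, x}}) {u, w} cv ce u (ce {v, x})"
    unfolding missing_color_def using edges_at_u by auto
  then show "partial_total_coloring k V E (E - {{u, v}}) {u, w} cv (ce({v, x} := c, {u, x} := ce {v, x}))"
    and "missing_color (E - {{u, v}}) {u, w} cv (ce({v, x} := c, {u, x} := ce {v, x})) v (ce {v, x})"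
    using partial_total_coloring_swap_edges[OF col edges_remaining(2,1) vertices_distinct(3) vertices_distinct(1)[symmetric]]
      mv ux by auto
  have "{v, x} \<noteq> {u, x}" "{w, y} \<noteq> {v, x}" "{w, y} \<noteq> {u, x}" "{w, z} \<noteq> {v, x}" "{w, z} \<noteq> {u, x}"
    using vertices_distinct by (auto simp: doubleton_eq_iff)
  then show "(ce({v, x} := c, {u, x} := ce {v, x})) {u, x} = ce {v, x}"
    and "(ce({v, x} := c, {u, x} := ce {v, x})) {v, x} = c"
    and "(ce({v, x} := c, {u, x} := ce {v, x})) {w, y} = ce {w, y}"
    and "(ce({v, x} := c, {u, x} := ce {v, x})) {w, z} = ce {w, z}" by simp_all
qed

lemma extend_uv_main:
  assumes col: "partial_total_coloring k V E (E - {{u, v}}) {u, w} cv ce" and c: "c \<in> {1..k}"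
    and mv: "missing_color (E - {{u, v}}) {u, w} cv ce v c"
  shows "\<exists>ce'. partial_total_coloring k V E E {u, w} cv ce'"
proof (cases "ce {u, x} = c")
  case False
  then show ?thesis by (rule extend_uv[OF col c mv])
next
  case ux: True
  show ?thesis
  proof (cases "missing_color (E - {{u, v}} - {{v, w}}) {u, w} cv ce w c")
    case True
    then show ?thesis by (rule extend_uv_recolor_vw[OF col c mv ux])
  next
    case False
    then have wc: "ce {w, y} = c \<or> ce {w, z} = c" by (rule not_missing_at_w)
    let ?g = "ce {v, x}" and ?ce = "ce({v, x} := c, {u, x} := ce {v, x})"
    have g: "?g \<in> {1..k}" using col edges_remaining(2) by (rule partial_total_coloring_edge_color)
    have "?g \<noteq> c" using missing_color_edgeD[OF mv edges_remaining(2)] by simp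
    note swapped = swap_ux_vx[OF col mv ux]
    show ?thesis
    proof (cases "missing_color (E - {{u, v}} - {{v, w}}) {u, w} cv ?ce w ?g")
      case True
      then show ?thesis by (rule extend_uv_recolor_vw[OF swapped(1) g swapped(2,3)])
    next
      case False
      then have "ce {w, y} = ?g \<or> ce {w, z} = ?g" using not_missing_at_w swapped(5,6) by metis
      then consider "ce {w, y} = c" "ce {w, z} = ?g" | "ce {w, y} = ?g" "ce {w, z} = c"
        using wc \<open>?g \<noteq> c\<close> by auto
      then show ?thesis
      proof cases
        case 1
        then show ?thesis by (rule extend_uv_swap_vy_wy[OF col c mv ux])
      next
        case 2 \<comment> \<open>the swap has exchanged the roles of \<open>c\<close> and \<open>?g\<close>\<close>
        then have "?ce {w, y} = ?g" "?ce {w, z} = ?ce {v, x}" using swapped(4-6) by simp_all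
        then show ?thesis by (rule extend_uv_swap_vy_wy[OF swapped(1) g swapped(2,3)])
      qed
    qed
  qed
qed

end

lemma extend_uv_triangle_uvw:
  assumes simple: "simple_graph V E" and col: "partial_total_coloring k V E (E - {{u, v}}) {u, w} cv ce"
    and c: "c \<in> {1..k}" and mv: "missing_color (E - {{u, v}}) {u, w} cv ce v c"
    and edges_at_u: "\<And>e. e \<in> E \<Longrightarrow> u \<in> e \<Longrightarrow> e = {u, v} \<or> e = {u, w}"
    and uv: "{u, v} \<in> E" and uw: "{u, w} \<in> E" and "v \<noteq> w" and deg: "degree V E w + 2 < k"
  shows "\<exists>ce'. partial_total_coloring k V E E {u, w} cv ce'"
proof -
  let ?E = "E - {{u, v}}"
  have "u \<noteq> v" using simple uv by (rule simple_graph_edgeD)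
  have uw': "{u, w} \<in> ?E" using uw \<open>v \<noteq> w\<close> by (auto simp: doubleton_eq_iff)
  have "finite {e \<in> ?E - {{u, w}}. w \<in> e}"
    using simple_graph_finite_edges[OF simple] by simp
  moreover have "card {e \<in> ?E - {{u, w}}. w \<in> e} \<le> degree V E w"
    using simple by (rule card_edges_at_le_degree) blast
  ultimately obtain d where d: "d \<in> {1..k}" "d \<noteq> c" and mw: "missing_color (?E - {{u, w}}) {u, w} cv ce w d"
    using ex_missing_color[of "{c}" "?E - {{u, w}}" w k "{u, w}" cv ce] deg by auto
  have no_edges_at_u: "missing_color (?E - {{u, w}}) {u, w} cv ce u c'" for c'
    unfolding missing_color_def using edges_at_u by auto
  have "partial_total_coloring k V E (?E - {{u, w}}) {u, w} cv ce"
    using col by (rule partial_total_coloring_subset) blast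
  then have col': "partial_total_coloring k V E ?E {u, w} cv (ce({u, w} := d))"
    using d(1) no_edges_at_u mw by (rule partial_total_coloring_insert_edge)
  have "missing_color ?E {u, w} cv (ce({u, w} := d)) u c"
    using no_edges_at_u d(2) by (rule missing_color_update)
  moreover have "missing_color ?E {u, w} cv (ce({u, w} := d)) v c"
    using missing_color_subset[OF mv] \<open>u \<noteq> v\<close> \<open>v \<noteq> w\<close> by (intro missing_color_update) auto
  ultimately show ?thesis using partial_total_coloring_insert_edge[OF col' c] by blast
qed

lemma deg2_deg3_triangles_reducible:
  assumes simple: "simple_graph V E" and col: "total_colorable k V (E - {{u, v}})" and k: "6 < k"
    and deg_v: "degree V E v < k" and deg_u: "degree V E u = 2" and deg_w: "degree V E w = 3"
    and edges: "{u, v} \<in> E" "{u, x} \<in> E" "{v, x} \<in> E" "{v, w} \<in> E" "{v, y} \<in> E" "{w, y} \<in> E"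
  shows "total_colorable k V E"
proof -
  have "v \<noteq> x" "v \<noteq> w" "v \<noteq> y" using simple_graph_edgeD(3)[OF simple] edges by blast+
  have "u \<noteq> w" using deg_u deg_w by auto
  have edges_at_u: "e = {u, v} \<or> e = {u, x}" if "e \<in> E" "u \<in> e" for e
    using edges_at_degree_2[OF simple deg_u edges(1,2) \<open>v \<noteq> x\<close> that] .
  obtain z where edges_at_w: "\<And>e. e \<in> E \<Longrightarrow> w \<in> e \<Longrightarrow> e = {v, w} \<or> e = {w, y} \<or> e = {w, z}"
    using edges_at_degree_3[OF simple deg_w _ edges(6) \<open>v \<noteq> y\<close>] edges(4) by (metis insert_commute)
  obtain cv ce where "total_coloring k V (E - {{u, v}}) cv ce" using col unfolding total_colorable_def by blast
  then have col': "partial_total_coloring k V E (E - {{u, v}}) {u, w} cv ce"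
    by (rule total_coloring_imp_partial) (auto simp: doubleton_eq_iff)
  obtain c where c: "c \<in> {1..k}" and mv: "missing_color (E - {{u, v}}) {u, w} cv ce v c"
    using ex_missing_color_remove_edge[OF simple edges(1) deg_v] .
  have "\<exists>ce'. partial_total_coloring k V E E {u, w} cv ce'"
  proof (cases "x = w")
    case True
    show ?thesis
      by (rule extend_uv_triangle_uvw[OF simple col' c mv])
        (use True edges edges_at_u \<open>v \<noteq> w\<close> deg_w k in auto)
  next
    case False
    interpret deg2_deg3_configuration V E u v w x y z
      by unfold_locales (use simple edges edges_at_u edges_at_w \<open>u \<noteq> w\<close> False in auto)
    show ?thesis using col' c mv by (rule extend_uv_main)
  qed
  then show ?thesis
    using total_colorable_if_partial_low_degree[OF simple, of "{u, w}"] deg_u deg_w k by auto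
qed

theorem lemma2p6:
  fixes V :: "'a set" and E :: "'a set set"
    and pos :: "'a \<Rightarrow> complex" and \<gamma> :: "'a set \<Rightarrow> real \<Rightarrow> complex"
  assumes "min_counterexample V E"
    and "plane_embedding V E pos \<gamma>"
    and "v \<in> V" and "degree V E v = 8"
    and "\<exists>u\<in>V. degree V E u = 2 \<and> {v, u} \<in> E \<and> edge_on_3face V E pos \<gamma> {v, u}"
  shows "\<not> (\<exists>w\<in>V. degree V E w = 3 \<and> {v, w} \<in> E \<and> edge_on_3face V E pos \<gamma> {v, w})"
proof
  assume "\<exists>w\<in>V. degree V E w = 3 \<and> {v, w} \<in> E \<and> edge_on_3face V E pos \<gamma> {v, w}"
  then obtain w where deg_w: "degree V E w = 3" and vw: "{v, w} \<in> E"
    and "edge_on_3face V E pos \<gamma> {v, w}" by blast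
  then obtain y where "{v, y} \<in> E" "{w, y} \<in> E" using assms(2) by (elim edge_on_3face_triangle)
  obtain u where deg_u: "degree V E u = 2" and vu: "{v, u} \<in> E"
    and "edge_on_3face V E pos \<gamma> {v, u}" using assms(5) by blast
  then obtain x where "{v, x} \<in> E" "{u, x} \<in> E" using assms(2) by (elim edge_on_3face_triangle)
  have uv: "{u, v} \<in> E" using vu by (simp add: insert_commute)
  have simple: "simple_graph V E" and not_colorable: "\<not> total_colorable 9 V E"
    using assms(1) unfolding min_counterexample_def by auto
  have "total_colorable 9 V (E - {{u, v}})"
    using assms(1) uv by (intro min_counterexample_subgraph_total_colorable) auto
  then have "total_colorable 9 V E"
    using deg2_deg3_triangles_reducible[OF simple _ _ _ deg_u deg_w uv] assms(4)
      \<open>{u, x} \<in> E\<close> \<open>{v, x} \<in> E\<close> vw \<open>{v, y} \<in> E\<close> \<open>{w, y} \<in> E\<close> by simp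
  with not_colorable show False ..
qed

end
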